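(* Let $F$, $H$, $X$, $\Omega$, $Q$ and the sequences generated by the IneIREG method be as described in the context, and suppose $H$ is $\mu$-strongly monotone for some $\mu>0$. Suppose $\eta_k\equiv\eta>0$; $\lambda_k\in[\underline\lambda,\overline\lambda]$ for all $k\ge0$ with $0<\underline\lambda\le\overline\lambda<1/L$, $L:=L_F+\eta L_H$; and $\alpha_0\in[0,1]$ and $\alpha_{k+1}\le(1-\beta_k)\alpha_k$ for all $k\ge0$, where $\beta_k:=\big(\frac{1}{1-\lambda_k^2L^2}+\frac{1}{2\lambda_k\eta\mu}\big)^{-1}$. Define $p_k:=\big(\prod_{i=0}^k(1-\beta_i)\big)^{-1}$ for $k\ge0$, for $k\ge1$ $\Lambda_k:=\sum_{j=0}^{k-1}\lambda_j\eta p_j$ and $\overline y_k:=\Lambda_k^{-1}\sum_{j=0}^{k-1}\lambda_j\eta p_jy_j$, and $\beta:=\big(\frac{1}{1-\overline\lambda^2L^2}+\frac{1}{2\underline\lambda\eta\mu}\big)^{-1}\in(0,1)$. Then for all $k\ge1$, $$0\le\mathrm{Gap}(\overline y_k,F,X)\le(k+1)(1-\beta)^k\Big(\frac{D_X^2}{\underline\lambda}\Big)+\eta\Big(\frac{\overline\lambda C_HD_X}{\underline\lambda}\Big).$$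
   Context: Work in $\mathbb{R}^n$ with Euclidean inner product $\langle\cdot,\cdot\rangle$ and norm $\|\cdot\|$. The maps $F\colon \mathrm{Dom}\,F\to\mathbb{R}^n$ and $H\colon\mathrm{Dom}\,H\to\mathbb{R}^n$ are monotone and Lipschitz continuous with constants $L_F>0$ and $L_H>0$; $H$ is $\mu$-strongly monotone means $\langle H(x)-H(y),x-y\rangle\ge\mu\|x-y\|^2$ for all $x,y\in\mathrm{Dom}\,H$. $X$ is a nonempty compact convex set and $\Omega$ a nonempty closed convex set with $X\subset\Omega\subset\mathrm{Dom}\,F\cap\mathrm{Dom}\,H$; $P_X,P_\Omega$ denote orthogonal projections. $Q:=\{x\in X:\langle F(x),y-x\rangle\ge0\ \forall y\in X\}$ is assumed nonempty. $D_X:=\sup_{x,y\in X}\|x-y\|$, $C_H:=\sup_{x\in X}\|H(x)\|$. $\mathrm{Gap}(z,F,X):=\sup_{x\in X}\langle F(x),z-x\rangle$. IneIREG method: start with $x_0=x_{-1}\in X$; for $k=0,1,\dots$, with parameters $\alpha_k\ge0$, $\lambda_k>0$, $\eta_k>0$, set $w_k=x_k+\alpha_k(x_k-x_{k-1})$, $w'_k=P_\Omega(w_k)$, $y_k=P_X\big(w_k-\lambda_k(F(w'_k)+\eta_kH(w'_k))\big)$, $x_{k+1}=P_X\big(w_k-\lambda_k(F(y_k)+\eta_kH(y_k))\big)$. *)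

theory Defs
  imports "HOL-Analysis.Analysis"
begin

definition monotone_op :: "('a::real_inner \<Rightarrow> 'a) \<Rightarrow> 'a set \<Rightarrow> bool" where
  "monotone_op T D \<longleftrightarrow> (\<forall>x\<in>D. \<forall>y\<in>D. inner (T x - T y) (x - y) \<ge> 0)"

definition strongly_monotone_op :: "real \<Rightarrow> ('a::real_inner \<Rightarrow> 'a) \<Rightarrow> 'a set \<Rightarrow> bool" where
  "strongly_monotone_op \<mu> T D \<longleftrightarrow>
     (\<forall>x\<in>D. \<forall>y\<in>D. inner (T x - T y) (x - y) \<ge> \<mu> * (norm (x - y))\<^sup>2)"

definition VI_sol :: "('a::real_inner \<Rightarrow> 'a) \<Rightarrow> 'a set \<Rightarrow> 'a set" where
  "VI_sol F X = {x \<in> X. \<forall>y\<in>X. inner (F x) (y - x) \<ge> 0}"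

definition gap :: "'a::real_inner \<Rightarrow> ('a \<Rightarrow> 'a) \<Rightarrow> 'a set \<Rightarrow> real" where
  "gap z F X = (SUP x\<in>X. inner (F x) (z - x))"

end

theory Submission
  imports Defs
begin

text \<open>
  One IneIREG step is an extragradient step for the strongly monotone operator F + \<eta> H. The two
  projection inequalities, the Lipschitz bound and strong monotonicity give, for every z in X,
  2 lam_k <F z + \<eta> H z, y_k - z> \<le> (1 - \<beta>_k) |w_k - z|^2 - |x_(k+1) - z|^2, where \<beta>_k comes from
  splitting |w_k - z| \<le> |w_k - y_k| + |y_k - z| with the weights 1 - lam_k^2 L^2 and 2 lam_k \<eta> \<mu>.
  Expanding |w_k - z|^2 along the inertial extrapolation and multiplying step k by
  p_k = 1 / prod_(i \<le> k) (1 - \<beta>_i), the potential p_(k-1) (|x_k - z|^2 - \<alpha>_k |x_(k-1) - z|^2 + \<alpha>_k D_X^2)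
  telescopes, because p_(k-1) \<alpha>_k is nonincreasing and at most 1; so the weighted sum is at most
  (2k + 1) D_X^2. Averaging with the weights lam_j \<eta> p_j, whose total is at least \<eta> lam_lo (1 - \<beta>)^(-k),
  and bounding the regularization terms \<eta> <H z, y_j - z> by \<eta> C_H D_X bounds <F z, ybar_k - z>
  uniformly in z. The gap is nonnegative because ybar_k, a convex combination of the y_j, lies in X.
\<close>

lemma extragradient_step_estimate:
  fixes w y x' z g0 g1 :: "'a::real_inner"
  assumes x'_proj: "inner (w - lam *\<^sub>R g1 - x') (z - x') \<le> 0"
    and y_proj: "inner (w - lam *\<^sub>R g0 - y) (x' - y) \<le> 0"
    and g_lip: "norm (g1 - g0) \<le> L * norm (w - y)"
    and "0 \<le> lam"
  shows "(norm (x' - z))\<^sup>2 \<le> (norm (w - z))\<^sup>2 - (1 - lam\<^sup>2 * L\<^sup>2) * (norm (w - y))\<^sup>2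
           + 2 * lam * inner g1 (z - y)"
proof -
  have expand: "(norm (x' - z))\<^sup>2 = (norm (w - z))\<^sup>2 - (norm (w - y))\<^sup>2 - (norm (y - x'))\<^sup>2
      + 2 * (inner (w - x') (z - x') + inner (w - y) (x' - y))"
    by (simp add: power2_norm_eq_inner inner_diff_left inner_diff_right inner_commute algebra_simps)
  have "inner (w - x') (z - x') + inner (w - y) (x' - y)
      \<le> lam * inner g1 (z - y) + lam * inner (g1 - g0) (y - x')"
    using x'_proj y_proj by (simp add: inner_diff_left inner_diff_right algebra_simps)
  moreover have "2 * (lam * inner (g1 - g0) (y - x')) \<le> (lam * L * norm (w - y))\<^sup>2 + (norm (y - x'))\<^sup>2"
  proof -
    have "lam * inner (g1 - g0) (y - x') \<le> lam * (norm (g1 - g0) * norm (y - x'))"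
      using \<open>0 \<le> lam\<close> norm_cauchy_schwarz by (rule mult_left_mono[rotated])
    also have "\<dots> \<le> lam * (L * norm (w - y) * norm (y - x'))"
      using g_lip \<open>0 \<le> lam\<close> by (intro mult_left_mono mult_right_mono) auto
    finally show ?thesis
      using sum_squares_bound[of "lam * L * norm (w - y)" "norm (y - x')"] by (simp add: mult.assoc)
  qed
  ultimately show ?thesis unfolding expand by (simp add: power_mult_distrib algebra_simps)
qed

lemma inverse_sum_inverse_mult_sq_le:
  fixes c1 c2 a b n :: real
  assumes "0 < c1" "0 < c2" "0 \<le> n" "n \<le> a + b"
  shows "inverse (1 / c1 + 1 / c2) * n\<^sup>2 \<le> c1 * a\<^sup>2 + c2 * b\<^sup>2"
proof -
  have "n\<^sup>2 \<le> (a + b)\<^sup>2"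
    using assms by (intro power_mono) auto
  also have "\<dots> \<le> (1 / c1 + 1 / c2) * (c1 * a\<^sup>2 + c2 * b\<^sup>2)"
  proof -
    have "(1 / c1 + 1 / c2) * (c1 * a\<^sup>2 + c2 * b\<^sup>2) - (a + b)\<^sup>2 = (c1 * a - c2 * b)\<^sup>2 / (c1 * c2)"
      using assms by (simp add: field_simps power2_eq_square)
    moreover have "0 \<le> (c1 * a - c2 * b)\<^sup>2 / (c1 * c2)"
      using assms by simp
    ultimately show ?thesis by linarith
  qed
  finally have "n\<^sup>2 \<le> (1 / c1 + 1 / c2) * (c1 * a\<^sup>2 + c2 * b\<^sup>2)" .
  moreover have "0 < 1 / c1 + 1 / c2" using assms by (simp add: add_pos_pos)
  ultimately show ?thesis by (simp add: field_simps)
qed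

lemma power2_norm_extrapolate:
  fixes u v z :: "'a::real_inner"
  shows "(norm (u + t *\<^sub>R (u - v) - z))\<^sup>2
    = (1 + t) * (norm (u - z))\<^sup>2 - t * (norm (v - z))\<^sup>2 + t * (1 + t) * (norm (u - v))\<^sup>2"
  by (simp add: power2_norm_eq_inner inner_diff_left inner_diff_right inner_add_left inner_add_right
      inner_commute algebra_simps)

lemma regularized_extragradient_step:
  fixes F H :: "'a::euclidean_space \<Rightarrow> 'a"
  assumes F_lip: "LF-lipschitz_on DomF F" and H_lip: "LH-lipschitz_on DomH H"
    and "convex X" "closed X" "convex \<Omega>" "closed \<Omega>" "X \<subseteq> \<Omega>" "\<Omega> \<subseteq> DomF \<inter> DomH"
    and "0 \<le> \<eta>" "0 \<le> lam" "z \<in> X"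
    and y_def: "y = closest_point X (w - lam *\<^sub>R (F (closest_point \<Omega> w) + \<eta> *\<^sub>R H (closest_point \<Omega> w)))"
    and x'_def: "x' = closest_point X (w - lam *\<^sub>R (F y + \<eta> *\<^sub>R H y))"
  shows "(norm (x' - z))\<^sup>2 \<le> (norm (w - z))\<^sup>2 - (1 - lam\<^sup>2 * (LF + \<eta> * LH)\<^sup>2) * (norm (w - y))\<^sup>2
           + 2 * lam * inner (F y + \<eta> *\<^sub>R H y) (z - y)"
proof -
  define L where "L = LF + \<eta> * LH"
  define G where "G u = F u + \<eta> *\<^sub>R H u" for u
  define w' where "w' = closest_point \<Omega> w"
  have "X \<noteq> {}" "\<Omega> \<noteq> {}" using \<open>z \<in> X\<close> \<open>X \<subseteq> \<Omega>\<close> by auto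
  then have y: "y \<in> X" and x': "x' \<in> X" and w': "w' \<in> \<Omega>"
    unfolding y_def x'_def w'_def using \<open>closed X\<close> \<open>closed \<Omega>\<close> by (auto intro: closest_point_in_set)
  have "L-lipschitz_on \<Omega> G"
    unfolding L_def G_def using \<open>\<Omega> \<subseteq> DomF \<inter> DomH\<close> \<open>0 \<le> \<eta>\<close>
    by (intro lipschitz_on_add lipschitz_on_cmult_nonneg lipschitz_on_subset[OF F_lip]
        lipschitz_on_subset[OF H_lip]) auto
  moreover have "norm (y - w') \<le> norm (y - w)"
    using closest_point_lipschitz[OF \<open>convex \<Omega>\<close> \<open>closed \<Omega>\<close> \<open>\<Omega> \<noteq> {}\<close>, of y w]
      closest_point_self[of y \<Omega>] y \<open>X \<subseteq> \<Omega>\<close> unfolding w'_def by (auto simp: dist_norm)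
  ultimately have G_lip: "norm (G y - G w') \<le> L * norm (w - y)"
    using lipschitz_on_normD[of L \<Omega> G y w'] lipschitz_on_nonneg[of L \<Omega> G] y w' \<open>X \<subseteq> \<Omega>\<close>
    by (metis mult_left_mono norm_minus_commute order_trans subsetD)
  have x'_proj: "inner (w - lam *\<^sub>R G y - x') (z - x') \<le> 0"
    unfolding x'_def G_def using \<open>convex X\<close> \<open>closed X\<close> \<open>z \<in> X\<close> by (rule closest_point_dot)
  have y_proj: "inner (w - lam *\<^sub>R G w' - y) (x' - y) \<le> 0"
    unfolding y_def G_def w'_def using \<open>convex X\<close> \<open>closed X\<close> x' by (rule closest_point_dot)
  from extragradient_step_estimate[OF x'_proj y_proj G_lip \<open>0 \<le> lam\<close>] show ?thesis
    unfolding L_def G_def .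
qed

lemma regularized_extragradient_descent:
  fixes F H :: "'a::euclidean_space \<Rightarrow> 'a" and LF LH \<eta> :: real
  defines "L \<equiv> LF + \<eta> * LH"
  assumes F_mono: "monotone_op F DomF" and F_lip: "LF-lipschitz_on DomF F"
    and H_strong: "strongly_monotone_op \<mu> H DomH" and H_lip: "LH-lipschitz_on DomH H"
    and X: "convex X" "closed X" and \<Omega>: "convex \<Omega>" "closed \<Omega>"
    and sub: "X \<subseteq> \<Omega>" "\<Omega> \<subseteq> DomF \<inter> DomH"
    and "0 < \<mu>" "0 < \<eta>" "0 < lam" "lam * L < 1" "z \<in> X"
    and y_def: "y = closest_point X (w - lam *\<^sub>R (F (closest_point \<Omega> w) + \<eta> *\<^sub>R H (closest_point \<Omega> w)))"
    and x'_def: "x' = closest_point X (w - lam *\<^sub>R (F y + \<eta> *\<^sub>R H y))"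
  shows "2 * lam * inner (F z + \<eta> *\<^sub>R H z) (y - z)
    \<le> (1 - inverse (1 / (1 - lam\<^sup>2 * L\<^sup>2) + 1 / (2 * lam * \<eta> * \<mu>))) * (norm (w - z))\<^sup>2
       - (norm (x' - z))\<^sup>2"
proof -
  define G where "G u = F u + \<eta> *\<^sub>R H u" for u
  have step: "(norm (x' - z))\<^sup>2 \<le> (norm (w - z))\<^sup>2 - (1 - lam\<^sup>2 * L\<^sup>2) * (norm (w - y))\<^sup>2
      + 2 * lam * inner (G y) (z - y)"
    unfolding L_def G_def using F_lip H_lip X \<Omega> sub \<open>0 < \<eta>\<close> \<open>0 < lam\<close> \<open>z \<in> X\<close> y_def x'_def
    by (intro regularized_extragradient_step) auto
  have "y \<in> X" using \<open>z \<in> X\<close> X unfolding y_def by (auto intro: closest_point_in_set)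
  then have "y \<in> DomF" "y \<in> DomH" "z \<in> DomF" "z \<in> DomH"
    using \<open>z \<in> X\<close> sub by auto
  then have "0 \<le> inner (F z - F y) (z - y)" "\<mu> * (norm (z - y))\<^sup>2 \<le> inner (H z - H y) (z - y)"
    using F_mono H_strong unfolding monotone_op_def strongly_monotone_op_def by auto
  then have "inner (G y) (z - y) \<le> inner (G z) (z - y) - \<eta> * \<mu> * (norm (z - y))\<^sup>2"
    using mult_left_mono[of "\<mu> * (norm (z - y))\<^sup>2" "inner (H z - H y) (z - y)" \<eta>] \<open>0 < \<eta>\<close>
    unfolding G_def by (simp add: inner_add_left inner_diff_left algebra_simps)
  then have "2 * lam * inner (G y) (z - y)
      \<le> 2 * lam * (inner (G z) (z - y) - \<eta> * \<mu> * (norm (z - y))\<^sup>2)"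
    using \<open>0 < lam\<close> by (intro mult_left_mono) auto
  then have G_mono: "2 * lam * inner (G y) (z - y)
      \<le> 2 * lam * inner (G z) (z - y) - (2 * lam * \<eta> * \<mu>) * (norm (z - y))\<^sup>2"
    by (simp add: algebra_simps)
  have harmonic: "inverse (1 / (1 - lam\<^sup>2 * L\<^sup>2) + 1 / (2 * lam * \<eta> * \<mu>)) * (norm (w - z))\<^sup>2
      \<le> (1 - lam\<^sup>2 * L\<^sup>2) * (norm (w - y))\<^sup>2 + (2 * lam * \<eta> * \<mu>) * (norm (z - y))\<^sup>2"
  proof (rule inverse_sum_inverse_mult_sq_le)
    have "0 \<le> L" unfolding L_def
      using lipschitz_on_nonneg[OF F_lip] lipschitz_on_nonneg[OF H_lip] \<open>0 < \<eta>\<close> by simp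
    then have "(lam * L)\<^sup>2 < 1"
      using \<open>lam * L < 1\<close> \<open>0 < lam\<close> by (simp add: abs_square_less_1)
    then show "0 < 1 - lam\<^sup>2 * L\<^sup>2" by (simp add: power_mult_distrib)
    show "0 < 2 * lam * \<eta> * \<mu>" using \<open>0 < lam\<close> \<open>0 < \<eta>\<close> \<open>0 < \<mu>\<close> by simp
    show "norm (w - z) \<le> norm (w - y) + norm (z - y)"
      using norm_triangle_ineq[of "w - y" "y - z"] by (simp add: norm_minus_commute)
  qed simp
  have "inner (G z) (y - z) = - inner (G z) (z - y)" by (simp add: inner_diff_right)
  with step G_mono harmonic show ?thesis unfolding G_def by (simp add: algebra_simps)
qed

definition inv_prod_one_minus :: "(nat \<Rightarrow> real) \<Rightarrow> nat \<Rightarrow> real" where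
  "inv_prod_one_minus \<beta> k = inverse (\<Prod>i<k. 1 - \<beta> i)"

lemma inv_prod_one_minus_0 [simp]: "inv_prod_one_minus \<beta> 0 = 1"
  by (simp add: inv_prod_one_minus_def)

lemma inv_prod_one_minus_Suc:
  "\<beta> k < 1 \<Longrightarrow> inv_prod_one_minus \<beta> (Suc k) * (1 - \<beta> k) = inv_prod_one_minus \<beta> k"
  by (simp add: inv_prod_one_minus_def)

lemma inv_prod_one_minus_pos: "(\<And>i. \<beta> i < 1) \<Longrightarrow> 0 < inv_prod_one_minus \<beta> k"
  unfolding inv_prod_one_minus_def by (simp add: prod_pos)

lemma inv_prod_one_minus_ge_inverse_power:
  assumes "\<And>i. b \<le> \<beta> i" "\<And>i. \<beta> i < 1"
  shows "inverse ((1 - b) ^ k) \<le> inv_prod_one_minus \<beta> k"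
proof -
  have "(\<Prod>i<k. 1 - \<beta> i) \<le> (\<Prod>i<k. 1 - b)"
    using assms by (intro prod_mono) (auto simp: less_imp_le)
  then show ?thesis
    unfolding inv_prod_one_minus_def using assms by (intro le_imp_inverse_le) (auto simp: prod_pos)
qed

text \<open>The index k - 1 is truncated, so at k = 0 the term a (k - 1) is a 0, matching x_(-1) = x_0.\<close>

lemma inertial_weighted_sum_le:
  fixes a d r \<alpha> \<beta> :: "nat \<Rightarrow> real"
  assumes \<beta>: "\<And>k. 0 \<le> \<beta> k" "\<And>k. \<beta> k < 1"
    and \<alpha>: "\<And>k. 0 \<le> \<alpha> k" "\<alpha> 0 \<le> 1" "\<And>k. \<alpha> (Suc k) \<le> (1 - \<beta> k) * \<alpha> k"
    and a: "\<And>k. 0 \<le> a k" "\<And>k. a k \<le> D" and d: "\<And>k. d k \<le> D"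
    and descent: "\<And>k. r k \<le> (1 - \<beta> k) * ((1 + \<alpha> k) * a k - \<alpha> k * a (k - 1) + \<alpha> k * (1 + \<alpha> k) * d k)
                          - a (Suc k)"
  shows "(\<Sum>j<k. inv_prod_one_minus \<beta> (Suc j) * r j) \<le> (2 * real k + 1) * D"
proof -
  define c where "c = inv_prod_one_minus \<beta>"
  \<comment> \<open>Lyapunov potential: in U (Suc k) - U k the inertial terms cancel up to 2 D,
    because c k * \<alpha> k decreases and stays \<le> 1\<close>
  define U where "U k = c k * (a k - \<alpha> k * a (k - 1) + \<alpha> k * D)" for k
  have c_pos: "0 < c k" for k unfolding c_def using \<beta>(2) by (rule inv_prod_one_minus_pos)
  have c_Suc: "c (Suc k) * (1 - \<beta> k) = c k" for k unfolding c_def using \<beta>(2) by (rule inv_prod_one_minus_Suc)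
  have c\<alpha>_dec: "c (Suc k) * \<alpha> (Suc k) \<le> c k * \<alpha> k" for k
    using mult_left_mono[OF \<alpha>(3)[of k] less_imp_le[OF c_pos[of "Suc k"]]]
    by (simp add: c_Suc mult.assoc[symmetric])
  have c\<alpha>_le: "c k * \<alpha> k \<le> 1" for k
  proof (induction k)
    case (Suc k)
    then show ?case using c\<alpha>_dec[of k] by linarith
  qed (use \<alpha>(2) in \<open>simp add: c_def\<close>)
  have \<alpha>_le: "\<alpha> k \<le> 1" for k
  proof (induction k)
    case (Suc k)
    then show ?case
      using \<alpha>(3)[of k] mult_left_le_one_le[OF \<alpha>(1)[of k], of "1 - \<beta> k"] \<beta>[of k] by simp
  qed (use \<alpha>(2) in simp)
  have "0 \<le> D" using a(1)[of 0] a(2)[of 0] by linarith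
  have step: "c (Suc k) * r k + U (Suc k) \<le> U k + 2 * D" for k
  proof -
    define A where "A = (1 + \<alpha> k) * a k - \<alpha> k * a (k - 1)"
    have "\<alpha> k * (1 + \<alpha> k) * d k \<le> \<alpha> k * (1 + \<alpha> k) * D"
      using \<alpha>(1)[of k] d[of k] by (intro mult_left_mono) auto
    also have "\<dots> \<le> 2 * \<alpha> k * D"
      using \<alpha>(1)[of k] \<alpha>_le[of k] \<open>0 \<le> D\<close> by (intro mult_right_mono) (auto simp: algebra_simps mult_left_le)
    finally have "(1 - \<beta> k) * (A + \<alpha> k * (1 + \<alpha> k) * d k) \<le> (1 - \<beta> k) * (A + 2 * \<alpha> k * D)"
      using \<beta>(2)[of k] by (intro mult_left_mono) auto
    then have "r k \<le> (1 - \<beta> k) * (A + 2 * \<alpha> k * D) - a (Suc k)"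
      using descent[of k] unfolding A_def by linarith
    then have "c (Suc k) * r k \<le> c (Suc k) * ((1 - \<beta> k) * (A + 2 * \<alpha> k * D) - a (Suc k))"
      using c_pos[of "Suc k"] by (intro mult_left_mono) auto
    also have "\<dots> = c k * (A + 2 * \<alpha> k * D) - c (Suc k) * a (Suc k)"
      using c_Suc[of k] by (simp add: right_diff_distrib mult.assoc[symmetric])
    finally have "c (Suc k) * r k \<le> c k * (A + 2 * \<alpha> k * D) - c (Suc k) * a (Suc k)" .
    moreover have "0 \<le> (c k * \<alpha> k - c (Suc k) * \<alpha> (Suc k)) * (D - a k)"
      using c\<alpha>_dec[of k] a(2)[of k] by simp
    moreover have "c k * \<alpha> k * D \<le> D"
      using mult_right_mono[OF c\<alpha>_le[of k] \<open>0 \<le> D\<close>] by simp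
    ultimately show ?thesis unfolding U_def A_def by (simp add: algebra_simps)
  qed
  have "(\<Sum>j<k. c (Suc j) * r j) + U k \<le> (2 * real k + 1) * D"
  proof (induction k)
    case 0
    have "(1 - \<alpha> 0) * a 0 + \<alpha> 0 * D \<le> D"
      using mult_left_mono[OF a(2)[of 0], of "1 - \<alpha> 0"] \<alpha>(2) by (simp add: algebra_simps)
    then show ?case unfolding U_def c_def by (simp add: algebra_simps)
  next
    case (Suc k)
    then show ?case using step[of k] by (simp add: algebra_simps)
  qed
  moreover have "0 \<le> U k"
  proof -
    have "\<alpha> k * a (k - 1) \<le> \<alpha> k * D" using a(2) \<alpha>(1) by (rule mult_left_mono)
    then show ?thesis unfolding U_def using c_pos[of k] a(1)[of k] by simp
  qed
  ultimately show ?thesis unfolding c_def by linarith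
qed

lemma weighted_mean_in_convex:
  fixes y :: "nat \<Rightarrow> 'a::real_vector"
  assumes "convex X" "\<And>j. j < k \<Longrightarrow> y j \<in> X"
    and "\<And>j. j < k \<Longrightarrow> 0 \<le> \<omega> j" "0 < (\<Sum>j<k. \<omega> j)"
  shows "inverse (\<Sum>j<k. \<omega> j) *\<^sub>R (\<Sum>j<k. \<omega> j *\<^sub>R y j) \<in> X"
proof -
  have "(\<Sum>j<k. inverse (\<Sum>j<k. \<omega> j) * \<omega> j) = 1"
    using assms(4) by (simp add: sum_distrib_left[symmetric])
  then have "(\<Sum>j<k. (inverse (\<Sum>j<k. \<omega> j) * \<omega> j) *\<^sub>R y j) \<in> X"
    using assms by (intro convex_sum) auto
  then show ?thesis by (simp add: scaleR_sum_right)
qed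

lemma inner_weighted_mean_diff_le:
  fixes y :: "nat \<Rightarrow> 'a::real_inner"
  assumes "\<And>j. j < k \<Longrightarrow> 0 \<le> \<omega> j" "0 < (\<Sum>j<k. \<omega> j)"
    and "(\<Sum>j<k. \<omega> j * inner (u + v) (y j - z)) \<le> B"
    and "\<And>j. j < k \<Longrightarrow> - M \<le> inner v (y j - z)"
  shows "inner u (inverse (\<Sum>j<k. \<omega> j) *\<^sub>R (\<Sum>j<k. \<omega> j *\<^sub>R y j) - z) \<le> B / (\<Sum>j<k. \<omega> j) + M"
proof -
  define W where "W = (\<Sum>j<k. \<omega> j)"
  have "inner u (inverse W *\<^sub>R (\<Sum>j<k. \<omega> j *\<^sub>R y j) - z) = (\<Sum>j<k. \<omega> j * inner u (y j - z)) / W"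
    using assms(2) unfolding W_def
    by (simp add: inner_diff_right inner_sum_right sum_subtractf sum_distrib_right[symmetric]
        right_diff_distrib field_simps)
  also have "(\<Sum>j<k. \<omega> j * inner u (y j - z))
      = (\<Sum>j<k. \<omega> j * inner (u + v) (y j - z)) - (\<Sum>j<k. \<omega> j * inner v (y j - z))"
    by (simp add: inner_add_left distrib_left sum.distrib)
  also have "\<dots> \<le> B + M * W"
  proof -
    have "(\<Sum>j<k. \<omega> j * (- M)) \<le> (\<Sum>j<k. \<omega> j * inner v (y j - z))"
      using assms(1,4) by (intro sum_mono mult_left_mono) auto
    moreover have "(\<Sum>j<k. \<omega> j * (- M)) = - (M * W)"
      unfolding W_def by (simp add: sum_distrib_left[symmetric] sum_negf mult.commute)
    ultimately show ?thesis using assms(3) by linarith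
  qed
  finally show ?thesis using assms(2) unfolding W_def by (simp add: divide_right_mono add_divide_distrib)
qed

lemma gap_nonneg:
  fixes F :: "'a::real_inner \<Rightarrow> 'a"
  assumes "compact X" "continuous_on X F" "z \<in> X"
  shows "0 \<le> gap z F X"
proof -
  have "continuous_on X (\<lambda>x. inner (F x) (z - x))"
    using assms(2) by (intro continuous_intros)
  then have "bdd_above ((\<lambda>x. inner (F x) (z - x)) ` X)"
    using assms(1) by (intro bounded_imp_bdd_above compact_imp_bounded compact_continuous_image)
  then show ?thesis unfolding gap_def using assms(3) by (rule cSUP_upper2) simp
qed

locale ineireg =
  fixes F H :: "'a::euclidean_space \<Rightarrow> 'a"
    and DomF DomH X \<Omega> :: "'a set"
    and LF LH \<mu> \<eta> lam_lo lam_hi :: real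
    and \<alpha> lam :: "nat \<Rightarrow> real"
    and x w w' y :: "nat \<Rightarrow> 'a"
  assumes F_mono: "monotone_op F DomF" and F_lip: "LF-lipschitz_on DomF F"
    and H_lip: "LH-lipschitz_on DomH H"
    and H_strong: "strongly_monotone_op \<mu> H DomH" and mu_pos: "\<mu> > 0"
    and X_compact: "compact X" and X_convex: "convex X"
    and Om_closed: "closed \<Omega>" and Om_convex: "convex \<Omega>"
    and X_sub: "X \<subseteq> \<Omega>" and Om_sub: "\<Omega> \<subseteq> DomF \<inter> DomH"
    and eta_pos: "\<eta> > 0"
    and lam_lo_pos: "0 < lam_lo" and lam_hi_lt: "lam_hi < 1 / (LF + \<eta> * LH)"
    and lam_bounds: "\<And>k. lam_lo \<le> lam k \<and> lam k \<le> lam_hi"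
    and alpha_nonneg: "\<And>k. \<alpha> k \<ge> 0"
    and alpha0: "\<alpha> 0 \<le> 1"
    and alpha_dec: "\<And>k. \<alpha> (Suc k) \<le>
        (1 - inverse (1 / (1 - (lam k)\<^sup>2 * (LF + \<eta> * LH)\<^sup>2) + 1 / (2 * lam k * \<eta> * \<mu>))) * \<alpha> k"
    and x0: "x 0 \<in> X"
    and w_def: "\<And>k. w k = x k + \<alpha> k *\<^sub>R (x k - (if k = 0 then x 0 else x (k - 1)))"
    and w'_def: "\<And>k. w' k = closest_point \<Omega> (w k)"
    and y_def: "\<And>k. y k = closest_point X (w k - lam k *\<^sub>R (F (w' k) + \<eta> *\<^sub>R H (w' k)))"
    and x_def: "\<And>k. x (Suc k) = closest_point X (w k - lam k *\<^sub>R (F (y k) + \<eta> *\<^sub>R H (y k)))"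
begin

abbreviation "L \<equiv> LF + \<eta> * LH"
abbreviation "DX \<equiv> diameter X"
abbreviation "CH \<equiv> SUP z\<in>X. norm (H z)"

definition \<beta> :: "nat \<Rightarrow> real" where
  "\<beta> k = inverse (1 / (1 - (lam k)\<^sup>2 * L\<^sup>2) + 1 / (2 * lam k * \<eta> * \<mu>))"

definition \<beta>_lo :: real where
  "\<beta>_lo = inverse (1 / (1 - lam_hi\<^sup>2 * L\<^sup>2) + 1 / (2 * lam_lo * \<eta> * \<mu>))"

definition p :: "nat \<Rightarrow> real" where
  "p k = inverse (\<Prod>i\<in>{0..k}. 1 - \<beta> i)"

definition \<Lambda> :: "nat \<Rightarrow> real" where
  "\<Lambda> k = (\<Sum>j<k. lam j * \<eta> * p j)"

definition ybar :: "nat \<Rightarrow> 'a" where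
  "ybar k = inverse (\<Lambda> k) *\<^sub>R (\<Sum>j<k. (lam j * \<eta> * p j) *\<^sub>R y j)"

lemma lam_pos: "0 < lam k"
  using lam_bounds[of k] lam_lo_pos by linarith

lemma L_nonneg: "0 \<le> L"
  using lipschitz_on_nonneg[OF F_lip] lipschitz_on_nonneg[OF H_lip] eta_pos by simp

lemma lam_hi_L_lt_1: "lam_hi * L < 1"
proof -
  have "0 < lam_hi" using lam_pos[of 0] lam_bounds[of 0] by linarith
  then show ?thesis using lam_hi_lt L_nonneg by (cases "L = 0") (auto simp: field_simps)
qed

lemma lam_L_lt_1: "lam k * L < 1"
  using lam_bounds[of k] L_nonneg lam_hi_L_lt_1 mult_right_mono[of "lam k" lam_hi L] by linarith

lemma beta_bounds: "0 < \<beta>_lo" "\<beta>_lo \<le> \<beta> k" "\<beta> k < 1"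
proof -
  define A where "A t = 1 / (1 - t\<^sup>2 * L\<^sup>2)" for t
  define B where "B t = 1 / (2 * t * \<eta> * \<mu>)" for t
  have "(lam k * L)\<^sup>2 \<le> (lam_hi * L)\<^sup>2" "(lam_hi * L)\<^sup>2 < 1"
    using lam_bounds[of k] lam_pos[of k] L_nonneg lam_hi_L_lt_1
    by (auto intro!: power_mono mult_right_mono simp: abs_square_less_1)
  then have "1 \<le> A (lam k)" "A (lam k) \<le> A lam_hi"
    unfolding A_def by (auto simp: power_mult_distrib intro!: divide_left_mono)
  moreover have "0 < B (lam k)" "B (lam k) \<le> B lam_lo"
    unfolding B_def using lam_bounds[of k] lam_pos[of k] lam_lo_pos eta_pos mu_pos
    by (auto intro!: divide_left_mono mult_right_mono)
  moreover have "\<beta> k = inverse (A (lam k) + B (lam k))" "\<beta>_lo = inverse (A lam_hi + B lam_lo)"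
    unfolding A_def B_def \<beta>_def \<beta>_lo_def by simp_all
  ultimately show "0 < \<beta>_lo" "\<beta>_lo \<le> \<beta> k" "\<beta> k < 1"
    by (auto intro!: le_imp_inverse_le simp: inverse_less_1_iff)
qed

lemma beta_pos: "0 < \<beta> k"
  using beta_bounds(1) beta_bounds(2)[of k] by linarith

lemma beta_lo_lt_1: "\<beta>_lo < 1"
  using beta_bounds(2,3)[of 0] by linarith

lemma alpha_Suc_le: "\<alpha> (Suc k) \<le> (1 - \<beta> k) * \<alpha> k"
  unfolding \<beta>_def by (rule alpha_dec)

lemma X_ne: "X \<noteq> {}"
  using x0 by auto

lemma x_in_X: "x k \<in> X"
  using X_compact X_ne x0 by (cases k) (auto simp: x_def intro: closest_point_in_set compact_imp_closed)

lemma y_in_X: "y k \<in> X"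
  using X_compact X_ne unfolding y_def by (auto intro: closest_point_in_set compact_imp_closed)

lemma descent:
  assumes "z \<in> X"
  shows "2 * lam k * inner (F z + \<eta> *\<^sub>R H z) (y k - z) \<le> (1 - \<beta> k) * (norm (w k - z))\<^sup>2 - (norm (x (Suc k) - z))\<^sup>2"
  using F_mono F_lip H_strong H_lip X_convex compact_imp_closed[OF X_compact] Om_convex Om_closed X_sub Om_sub
    mu_pos eta_pos lam_pos lam_L_lt_1 assms y_def[unfolded w'_def] x_def
  unfolding \<beta>_def by (rule regularized_extragradient_descent)

lemma norm_diff_le_DX: "u \<in> X \<Longrightarrow> v \<in> X \<Longrightarrow> norm (u - v) \<le> DX"
  using diameter_bounded_bound[OF compact_imp_bounded[OF X_compact]] by (simp add: dist_norm)

lemma norm_H_le_CH: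
  assumes "z \<in> X"
  shows "norm (H z) \<le> CH"
proof -
  have "continuous_on X H"
    using lipschitz_on_continuous_on[OF H_lip] X_sub Om_sub continuous_on_subset by blast
  then have "bdd_above ((\<lambda>z. norm (H z)) ` X)"
    using X_compact by (intro bounded_imp_bdd_above compact_imp_bounded compact_continuous_image continuous_intros)
  then show ?thesis using assms by (rule cSUP_upper2) simp
qed

lemma p_eq_inv_prod_one_minus: "p k = inv_prod_one_minus \<beta> (Suc k)"
  unfolding inv_prod_one_minus_def p_def by (simp add: atLeast0AtMost lessThan_Suc_atMost)

lemma weighted_descent_sum_le:
  assumes "z \<in> X"
  shows "(\<Sum>j<k. p j * (2 * lam j * inner (F z + \<eta> *\<^sub>R H z) (y j - z))) \<le> (2 * real k + 1) * DX\<^sup>2"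
  unfolding p_eq_inv_prod_one_minus
proof (rule inertial_weighted_sum_le[where a = "\<lambda>j. (norm (x j - z))\<^sup>2" and d = "\<lambda>j. (norm (x j - x (j - 1)))\<^sup>2"])
  fix j
  have "w j = x j + \<alpha> j *\<^sub>R (x j - x (j - 1))" using w_def[of j] by (cases j) auto
  then show "2 * lam j * inner (F z + \<eta> *\<^sub>R H z) (y j - z)
      \<le> (1 - \<beta> j) * ((1 + \<alpha> j) * (norm (x j - z))\<^sup>2 - \<alpha> j * (norm (x (j - 1) - z))\<^sup>2
           + \<alpha> j * (1 + \<alpha> j) * (norm (x j - x (j - 1)))\<^sup>2) - (norm (x (Suc j) - z))\<^sup>2"
    using descent[OF assms, of j] by (simp add: power2_norm_extrapolate)
  show "(norm (x j - z))\<^sup>2 \<le> DX\<^sup>2" "(norm (x j - x (j - 1)))\<^sup>2 \<le> DX\<^sup>2"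
    using norm_diff_le_DX x_in_X assms by (auto intro!: power_mono)
qed (use beta_pos beta_bounds(3) alpha_nonneg alpha0 alpha_Suc_le in \<open>auto simp: less_imp_le\<close>)

lemma p_pos: "0 < p k"
  unfolding p_eq_inv_prod_one_minus using beta_bounds(3) by (rule inv_prod_one_minus_pos)

lemma Lambda_ge_inverse_power:
  assumes "1 \<le> k"
  shows "\<eta> * lam_lo * inverse ((1 - \<beta>_lo) ^ k) \<le> \<Lambda> k"
proof -
  obtain m where k: "k = Suc m" using assms by (cases k) auto
  have "inverse ((1 - \<beta>_lo) ^ k) \<le> p m"
    unfolding p_eq_inv_prod_one_minus k using beta_bounds(2,3) by (rule inv_prod_one_minus_ge_inverse_power)
  then have "\<eta> * lam_lo * inverse ((1 - \<beta>_lo) ^ k) \<le> \<eta> * lam m * p m"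
    using lam_bounds[of m] lam_lo_pos eta_pos p_pos[of m] beta_lo_lt_1
    by (intro mult_mono mult_left_mono) auto
  also have "\<dots> \<le> \<Lambda> k"
    unfolding k \<Lambda>_def using lam_pos eta_pos p_pos
    by (simp add: sum_nonneg less_imp_le algebra_simps)
  finally show ?thesis .
qed

lemma Lambda_pos:
  assumes "1 \<le> k"
  shows "0 < \<Lambda> k"
proof -
  have "0 < \<eta> * lam_lo * inverse ((1 - \<beta>_lo) ^ k)"
    using lam_lo_pos eta_pos beta_lo_lt_1 by simp
  then show ?thesis using Lambda_ge_inverse_power[OF assms] by linarith
qed

lemma ergodic_mean_in_X: "1 \<le> k \<Longrightarrow> ybar k \<in> X"
  unfolding ybar_def using Lambda_pos unfolding \<Lambda>_def
  using X_convex y_in_X lam_pos eta_pos p_pos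
  by (intro weighted_mean_in_convex) (auto simp: less_imp_le)

lemma gap_ergodic_mean_nonneg: "1 \<le> k \<Longrightarrow> 0 \<le> gap (ybar k) F X"
proof (rule gap_nonneg[OF X_compact])
  show "continuous_on X F"
    using X_sub Om_sub by (blast intro: continuous_on_subset[OF lipschitz_on_continuous_on[OF F_lip]])
qed (rule ergodic_mean_in_X)

lemma DX_nonneg: "0 \<le> DX"
  using norm_diff_le_DX[OF x0 x0] by simp

lemma CH_nonneg: "0 \<le> CH"
  using norm_H_le_CH[OF x0] norm_ge_zero order_trans by blast

lemma inner_ergodic_mean_le:
  assumes "1 \<le> k" "z \<in> X"
  shows "inner (F z) (ybar k - z) \<le> \<eta> * ((real k + 1 / 2) * DX\<^sup>2) / \<Lambda> k + \<eta> * CH * DX"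
  unfolding ybar_def \<Lambda>_def
proof (rule inner_weighted_mean_diff_le[where v = "\<eta> *\<^sub>R H z"])
  have "(\<Sum>j<k. lam j * \<eta> * p j * inner (F z + \<eta> *\<^sub>R H z) (y j - z))
      = \<eta> / 2 * (\<Sum>j<k. p j * (2 * lam j * inner (F z + \<eta> *\<^sub>R H z) (y j - z)))"
    by (simp add: sum_distrib_left algebra_simps)
  also have "\<dots> \<le> \<eta> / 2 * ((2 * real k + 1) * DX\<^sup>2)"
    using weighted_descent_sum_le[OF assms(2)] eta_pos by (intro mult_left_mono) auto
  finally show "(\<Sum>j<k. lam j * \<eta> * p j * inner (F z + \<eta> *\<^sub>R H z) (y j - z))
      \<le> \<eta> * ((real k + 1 / 2) * DX\<^sup>2)"
    by (simp add: algebra_simps)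
next
  fix j
  have "\<bar>inner (H z) (y j - z)\<bar> \<le> norm (H z) * norm (y j - z)"
    by (rule Cauchy_Schwarz_ineq2)
  also have "\<dots> \<le> CH * DX"
    using norm_H_le_CH[OF assms(2)] norm_diff_le_DX[OF y_in_X assms(2)] CH_nonneg
    by (intro mult_mono) auto
  finally have "- (CH * DX) \<le> inner (H z) (y j - z)" by linarith
  then show "- (\<eta> * CH * DX) \<le> inner (\<eta> *\<^sub>R H z) (y j - z)"
    using mult_left_mono[of "- (CH * DX)" _ \<eta>] eta_pos by (simp add: mult.assoc)
qed (use lam_pos eta_pos p_pos Lambda_pos[OF assms(1)] in \<open>auto simp: \<Lambda>_def less_imp_le\<close>)

lemma gap_ergodic_mean_le:
  assumes "1 \<le> k"
  shows "gap (ybar k) F X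
    \<le> real (k + 1) * (1 - \<beta>_lo) ^ k * (DX\<^sup>2 / lam_lo) + \<eta> * (lam_hi * CH * DX / lam_lo)"
proof -
  have "\<eta> * ((real k + 1 / 2) * DX\<^sup>2) / \<Lambda> k
      \<le> \<eta> * ((real k + 1 / 2) * DX\<^sup>2) / (\<eta> * lam_lo * inverse ((1 - \<beta>_lo) ^ k))"
    using Lambda_ge_inverse_power[OF assms] Lambda_pos[OF assms] lam_lo_pos eta_pos beta_lo_lt_1
    by (intro divide_left_mono) auto
  also have "\<dots> = (real k + 1 / 2) * (1 - \<beta>_lo) ^ k * (DX\<^sup>2 / lam_lo)"
    using eta_pos lam_lo_pos beta_lo_lt_1 by (simp add: field_simps)
  also have "\<dots> \<le> real (k + 1) * (1 - \<beta>_lo) ^ k * (DX\<^sup>2 / lam_lo)"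
    using beta_lo_lt_1 lam_lo_pos by (intro mult_right_mono) auto
  finally have mean_term:
    "\<eta> * ((real k + 1 / 2) * DX\<^sup>2) / \<Lambda> k \<le> real (k + 1) * (1 - \<beta>_lo) ^ k * (DX\<^sup>2 / lam_lo)" .
  have "\<eta> * CH * DX * 1 \<le> \<eta> * CH * DX * (lam_hi / lam_lo)"
    using lam_bounds[of 0] lam_lo_pos eta_pos CH_nonneg DX_nonneg by (intro mult_left_mono) auto
  then have reg_term: "\<eta> * CH * DX \<le> \<eta> * (lam_hi * CH * DX / lam_lo)"
    by (simp add: mult_ac)
  show ?thesis
    unfolding gap_def using inner_ergodic_mean_le[OF assms] mean_term reg_term
    by (intro cSUP_least X_ne) fastforce
qed

end

theorem corollary4p18:
  fixes F H :: "'a::euclidean_space \<Rightarrow> 'a"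
    and DomF DomH X \<Omega> :: "'a set"
    and LF LH \<mu> \<eta> lam_lo lam_hi :: real
    and \<alpha> lam :: "nat \<Rightarrow> real"
    and x w w' y :: "nat \<Rightarrow> 'a"
  assumes F_mono: "monotone_op F DomF" and F_lip: "LF-lipschitz_on DomF F" and LF_pos: "LF > 0"
    and H_mono: "monotone_op H DomH" and H_lip: "LH-lipschitz_on DomH H" and LH_pos: "LH > 0"
    and H_strong: "strongly_monotone_op \<mu> H DomH" and mu_pos: "\<mu> > 0"
    and X_ne: "X \<noteq> {}" and X_compact: "compact X" and X_convex: "convex X"
    and Om_ne: "\<Omega> \<noteq> {}" and Om_closed: "closed \<Omega>" and Om_convex: "convex \<Omega>"
    and X_sub: "X \<subseteq> \<Omega>" and Om_sub: "\<Omega> \<subseteq> DomF \<inter> DomH"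
    and Q_ne: "VI_sol F X \<noteq> {}"
    and eta_pos: "\<eta> > 0"
    and lam_lo_pos: "0 < lam_lo" and lam_lo_hi: "lam_lo \<le> lam_hi" and lam_hi_lt: "lam_hi < 1 / (LF + \<eta> * LH)"
    and lam_bounds: "\<And>k. lam_lo \<le> lam k \<and> lam k \<le> lam_hi"
    and alpha_nonneg: "\<And>k. \<alpha> k \<ge> 0"
    and alpha0: "\<alpha> 0 \<le> 1"
    and alpha_dec: "\<And>k. \<alpha> (Suc k) \<le>
        (1 - inverse (1 / (1 - (lam k)\<^sup>2 * (LF + \<eta> * LH)\<^sup>2) + 1 / (2 * lam k * \<eta> * \<mu>))) * \<alpha> k"
    and x0: "x 0 \<in> X"
    and w_def: "\<And>k. w k = x k + \<alpha> k *\<^sub>R (x k - (if k = 0 then x 0 else x (k - 1)))"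
    and w'_def: "\<And>k. w' k = closest_point \<Omega> (w k)"
    and y_def: "\<And>k. y k = closest_point X (w k - lam k *\<^sub>R (F (w' k) + \<eta> *\<^sub>R H (w' k)))"
    and x_def: "\<And>k. x (Suc k) = closest_point X (w k - lam k *\<^sub>R (F (y k) + \<eta> *\<^sub>R H (y k)))"
  shows "let L = LF + \<eta> * LH;
             \<beta>k = (\<lambda>k. inverse (1 / (1 - (lam k)\<^sup>2 * L\<^sup>2) + 1 / (2 * lam k * \<eta> * \<mu>)));
             p = (\<lambda>k. inverse (\<Prod>i\<in>{0..k}. 1 - \<beta>k i));
             \<Lambda> = (\<lambda>k. \<Sum>j<k. lam j * \<eta> * p j);
             ybar = (\<lambda>k. inverse (\<Lambda> k) *\<^sub>R (\<Sum>j<k. (lam j * \<eta> * p j) *\<^sub>R y j));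
             \<beta> = inverse (1 / (1 - lam_hi\<^sup>2 * L\<^sup>2) + 1 / (2 * lam_lo * \<eta> * \<mu>));
             DX = diameter X;
             CH = (SUP z\<in>X. norm (H z))
         in \<forall>k\<ge>1. 0 \<le> gap (ybar k) F X \<and>
               gap (ybar k) F X \<le> real (k + 1) * (1 - \<beta>) ^ k * (DX\<^sup>2 / lam_lo)
                                    + \<eta> * (lam_hi * CH * DX / lam_lo)"
proof -
  \<comment> \<open>H_mono, Q_ne, LF_pos, LH_pos, X_ne, Om_ne and lam_lo_hi are implied by the other hypotheses or not needed\<close>
  interpret ineireg F H DomF DomH X \<Omega> LF LH \<mu> \<eta> lam_lo lam_hi \<alpha> lam x w w' y
    by unfold_locales (fact assms)+
  show ?thesis
    using gap_ergodic_mean_nonneg gap_ergodic_mean_le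
    unfolding Let_def ybar_def \<Lambda>_def p_def \<beta>_def \<beta>_lo_def by simp
qed

end
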